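(* Let $p:\tilde{Q}\to Q$ be a covering of finite quandles such that $\mathrm{Aut}(p)$ acts transitively on each fiber. If $y\in p^{-1}(x)$ for some $x\in Q$ and $\beta\in\mathrm{Inn}(\tilde{Q})$ satisfies $\beta(y)=y$, then $\beta$ acts as the identity on the fiber $p^{-1}(x)$. Hence if $y_0,y_1,y_2\in p^{-1}(x)$ and $(y_0,y_1)$ and $(y_0,y_2)$ lie in the same orbit of $\mathrm{Inn}(\tilde{Q})$ acting diagonally on pairs, then $y_1=y_2$.
   Context: A quandle is a set with operation $*$ satisfying $a*a=a$; unique right division; $(a*b)*c=(a*c)*(b*c)$. $R_a(y)=y*a$; $\mathrm{Inn}(\tilde Q)$ is the group generated by the $R_a$, $a\in\tilde Q$. A covering is a quandle epimorphism $p:\tilde Q\to Q$ with $p(y_1)=p(y_2)\Rightarrow R_{y_1}=R_{y_2}$; $\mathrm{Aut}(p)$ is the group of automorphisms $\lambda$ of $\tilde Q$ with $p\circ\lambda=p$. *)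

theory Defs
  imports Main
begin

definition quandle :: "'a set \<Rightarrow> ('a \<Rightarrow> 'a \<Rightarrow> 'a) \<Rightarrow> bool" where
  "quandle Q op \<longleftrightarrow>
     (\<forall>a\<in>Q. \<forall>b\<in>Q. op a b \<in> Q) \<and>
     (\<forall>a\<in>Q. op a a = a) \<and>
     (\<forall>a\<in>Q. \<forall>b\<in>Q. \<exists>!c. c \<in> Q \<and> op c a = b) \<and>
     (\<forall>a\<in>Q. \<forall>b\<in>Q. \<forall>c\<in>Q. op (op a b) c = op (op a c) (op b c))"

definition Rmap :: "'a set \<Rightarrow> ('a \<Rightarrow> 'a \<Rightarrow> 'a) \<Rightarrow> 'a \<Rightarrow> 'a \<Rightarrow> 'a" where
  "Rmap Q op a = (\<lambda>y. if y \<in> Q then op y a else y)"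

definition Rinv :: "'a set \<Rightarrow> ('a \<Rightarrow> 'a \<Rightarrow> 'a) \<Rightarrow> 'a \<Rightarrow> 'a \<Rightarrow> 'a" where
  "Rinv Q op a = (\<lambda>y. if y \<in> Q then (THE c. c \<in> Q \<and> op c a = y) else y)"

inductive_set Inn :: "'a set \<Rightarrow> ('a \<Rightarrow> 'a \<Rightarrow> 'a) \<Rightarrow> ('a \<Rightarrow> 'a) set"
  for Q op where
  Inn_id: "id \<in> Inn Q op"
| Inn_R: "f \<in> Inn Q op \<Longrightarrow> a \<in> Q \<Longrightarrow> Rmap Q op a \<circ> f \<in> Inn Q op"
| Inn_Rinv: "f \<in> Inn Q op \<Longrightarrow> a \<in> Q \<Longrightarrow> Rinv Q op a \<circ> f \<in> Inn Q op"

definition quandle_hom ::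
  "'a set \<Rightarrow> ('a \<Rightarrow> 'a \<Rightarrow> 'a) \<Rightarrow> 'b set \<Rightarrow> ('b \<Rightarrow> 'b \<Rightarrow> 'b) \<Rightarrow> ('a \<Rightarrow> 'b) \<Rightarrow> bool" where
  "quandle_hom Q1 op1 Q2 op2 f \<longleftrightarrow>
     (\<forall>a\<in>Q1. f a \<in> Q2) \<and> (\<forall>a\<in>Q1. \<forall>b\<in>Q1. f (op1 a b) = op2 (f a) (f b))"

definition covering ::
  "'a set \<Rightarrow> ('a \<Rightarrow> 'a \<Rightarrow> 'a) \<Rightarrow> 'b set \<Rightarrow> ('b \<Rightarrow> 'b \<Rightarrow> 'b) \<Rightarrow> ('a \<Rightarrow> 'b) \<Rightarrow> bool" where
  "covering Qt opt Q op p \<longleftrightarrow>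
     quandle Qt opt \<and> quandle Q op \<and> quandle_hom Qt opt Q op p \<and> p ` Qt = Q \<and>
     (\<forall>y1\<in>Qt. \<forall>y2\<in>Qt. p y1 = p y2 \<longrightarrow> (\<forall>z\<in>Qt. opt z y1 = opt z y2))"

definition Aut_cov ::
  "'a set \<Rightarrow> ('a \<Rightarrow> 'a \<Rightarrow> 'a) \<Rightarrow> ('a \<Rightarrow> 'b) \<Rightarrow> ('a \<Rightarrow> 'a) set" where
  "Aut_cov Qt opt p = {l. bij_betw l Qt Qt \<and> quandle_hom Qt opt Qt opt l \<and>
                          (\<forall>y\<in>Qt. p (l y) = p y)}"

end

theory Submission
  imports Defs
begin

text \<open>
  An element \<lambda> of Aut(p) preserves fibres, and in a covering R_a depends only on the fibre
  of a; hence \<lambda>(u * a) = \<lambda> u * \<lambda> a = \<lambda> u * a, i.e. \<lambda> commutes with every right translation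
  and therefore with all of Inn. If \<beta> \<in> Inn fixes y and z lies in the fibre of y, choose
  \<lambda> \<in> Aut(p) with \<lambda> y = z; then \<beta> z = \<beta> (\<lambda> y) = \<lambda> (\<beta> y) = z. The second claim applies
  this to the stabiliser \<beta> of y0.
\<close>

lemma Rinv_in_carrier_and_div:
  assumes "quandle Q op" "a \<in> Q" "w \<in> Q"
  shows "Rinv Q op a w \<in> Q" and "op (Rinv Q op a w) a = w"
proof -
  have "\<exists>!c. c \<in> Q \<and> op c a = w" using assms unfolding quandle_def by blast
  from theI'[OF this] show "Rinv Q op a w \<in> Q" "op (Rinv Q op a w) a = w"
    using assms(3) unfolding Rinv_def by simp_all
qed

lemma Rinv_eqI:
  assumes "quandle Q op" "a \<in> Q" "c \<in> Q" "op c a = w"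
  shows "Rinv Q op a w = c"
proof -
  have w: "w \<in> Q" using assms unfolding quandle_def by blast
  have "\<exists>!c. c \<in> Q \<and> op c a = w" using assms w unfolding quandle_def by blast
  from the1_equality[OF this] show ?thesis using assms w unfolding Rinv_def by simp
qed

lemma Inn_closed:
  assumes "quandle Q op" "f \<in> Inn Q op" "y \<in> Q"
  shows "f y \<in> Q"
  using assms(2,3)
proof (induction f rule: Inn.induct)
  case Inn_id then show ?case by simp
next
  case (Inn_R f a) then show ?case using assms(1) unfolding quandle_def Rmap_def by auto
next
  case (Inn_Rinv f a) then show ?case using Rinv_in_carrier_and_div[OF assms(1)] by auto
qed

lemma Inn_commute_if_commute_Rmap:
  assumes q: "quandle Q op" and lQ: "\<And>u. u \<in> Q \<Longrightarrow> l u \<in> Q"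
    and lR: "\<And>u a. u \<in> Q \<Longrightarrow> a \<in> Q \<Longrightarrow> l (op u a) = op (l u) a"
    and "f \<in> Inn Q op" "y \<in> Q"
  shows "l (f y) = f (l y)"
  using assms(4,5)
proof (induction f rule: Inn.induct)
  case Inn_id then show ?case by simp
next
  case (Inn_R f a)
  have "f y \<in> Q" "f (l y) \<in> Q" using Inn_closed[OF q Inn_R(1)] lQ Inn_R(4) by auto
  then show ?case using Inn_R lR by (simp add: Rmap_def)
next
  case (Inn_Rinv f a)
  define c where "c = Rinv Q op a (f y)"
  have fy: "f y \<in> Q" using Inn_closed[OF q Inn_Rinv(1) Inn_Rinv(4)] .
  have fly: "f (l y) \<in> Q" using Inn_closed[OF q Inn_Rinv(1) lQ[OF Inn_Rinv(4)]] .
  have c: "c \<in> Q" "op c a = f y"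
    using Rinv_in_carrier_and_div[OF q Inn_Rinv(2) fy] by (simp_all add: c_def)
  have "op (l c) a = f (l y)" using lR[OF c(1) Inn_Rinv(2)] c(2) Inn_Rinv by simp
  then have "Rinv Q op a (f (l y)) = l c" using Rinv_eqI[OF q Inn_Rinv(2) lQ[OF c(1)]] by simp
  then show ?case using fy fly by (simp add: Rmap_def Rinv_def c_def)
qed

lemma Aut_cov_commute_Rmap:
  assumes cov: "covering Qt opt Q op p" and l: "l \<in> Aut_cov Qt opt p"
    and u: "u \<in> Qt" and a: "a \<in> Qt"
  shows "l (opt u a) = opt (l u) a"
proof -
  have lu: "l u \<in> Qt" and la: "l a \<in> Qt" and "p (l a) = p a"
    and "l (opt u a) = opt (l u) (l a)"
    using l u a unfolding Aut_cov_def quandle_hom_def by auto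
  moreover have "opt (l u) (l a) = opt (l u) a"
    using cov la a lu \<open>p (l a) = p a\<close> unfolding covering_def by blast
  ultimately show ?thesis by simp
qed

lemma Inn_commute_Aut_cov:
  assumes cov: "covering Qt opt Q op p" and l: "l \<in> Aut_cov Qt opt p"
    and "f \<in> Inn Qt opt" "y \<in> Qt"
  shows "l (f y) = f (l y)"
proof (rule Inn_commute_if_commute_Rmap[OF _ _ _ assms(3,4)])
  show "quandle Qt opt" using cov unfolding covering_def by blast
  show "\<And>u. u \<in> Qt \<Longrightarrow> l u \<in> Qt" using l unfolding Aut_cov_def quandle_hom_def by blast
  show "\<And>u a. u \<in> Qt \<Longrightarrow> a \<in> Qt \<Longrightarrow> l (opt u a) = opt (l u) a"
    using Aut_cov_commute_Rmap[OF cov l] .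
qed

lemma Inn_stabiliser_fixes_fibre:
  assumes cov: "covering Qt opt Q op p"
    and trans: "\<forall>y1\<in>Qt. \<forall>y2\<in>Qt. p y1 = p y2 \<longrightarrow> (\<exists>l\<in>Aut_cov Qt opt p. l y1 = y2)"
    and "y \<in> Qt" "\<beta> \<in> Inn Qt opt" "\<beta> y = y" "z \<in> Qt" "p z = p y"
  shows "\<beta> z = z"
proof -
  obtain l where l: "l \<in> Aut_cov Qt opt p" "l y = z"
    using trans assms(3,6,7) by (metis (full_types))
  have "\<beta> z = l (\<beta> y)" using Inn_commute_Aut_cov[OF cov l(1) assms(4,3)] l(2) by simp
  then show ?thesis using assms(5) l(2) by simp
qed

theorem mainTheorem12:
  fixes Qt :: "'a set" and opt :: "'a \<Rightarrow> 'a \<Rightarrow> 'a"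
    and Q :: "'b set" and op :: "'b \<Rightarrow> 'b \<Rightarrow> 'b" and p :: "'a \<Rightarrow> 'b"
  assumes "finite Qt" and "finite Q"
    and "covering Qt opt Q op p"
    and trans: "\<forall>y1\<in>Qt. \<forall>y2\<in>Qt. p y1 = p y2 \<longrightarrow> (\<exists>l\<in>Aut_cov Qt opt p. l y1 = y2)"
  shows "(\<forall>x\<in>Q. \<forall>y\<in>Qt. \<forall>\<beta>\<in>Inn Qt opt. p y = x \<and> \<beta> y = y \<longrightarrow>
            (\<forall>z\<in>Qt. p z = x \<longrightarrow> \<beta> z = z))
       \<and> (\<forall>x\<in>Q. \<forall>y0\<in>Qt. \<forall>y1\<in>Qt. \<forall>y2\<in>Qt.
            p y0 = x \<and> p y1 = x \<and> p y2 = x \<and>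
            (\<exists>\<beta>\<in>Inn Qt opt. \<beta> y0 = y0 \<and> \<beta> y1 = y2) \<longrightarrow> y1 = y2)"
proof (intro conjI ballI impI allI)
  note fixes_fibre = Inn_stabiliser_fixes_fibre[OF assms(3) trans]
  show "\<beta> z = z" if "y \<in> Qt" "\<beta> \<in> Inn Qt opt" "p y = x \<and> \<beta> y = y" "z \<in> Qt" "p z = x"
    for x y \<beta> z
    using fixes_fibre[of y \<beta> z] that by simp
  show "y1 = y2" if y: "y0 \<in> Qt" "y1 \<in> Qt"
    and stab: "p y0 = x \<and> p y1 = x \<and> p y2 = x \<and> (\<exists>\<beta>\<in>Inn Qt opt. \<beta> y0 = y0 \<and> \<beta> y1 = y2)"
    for x y0 y1 y2
  proof -
    obtain \<beta> where "\<beta> \<in> Inn Qt opt" "\<beta> y0 = y0" "\<beta> y1 = y2" using stab by blast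
    then show ?thesis using fixes_fibre[of y0 \<beta> y1] y stab by simp
  qed
qed

end
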